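(* Each of the following systems has an isochronous center at the origin $O$ with zero Urabe function (in systems with $\pm,\mp$, upper signs throughout or lower signs throughout): (i) for every $a\in\mathbb R$: $\dot x=-y+xy-\frac{3a}{4}x^2+ax^3-\frac a4x^4$, $\dot y=x+3y^2+\frac{3a}{2}xy-x^2+\frac{9a}{4}x^2y+\left(\frac13+\frac98a^2\right)x^3-\frac{3a}{4}x^3y-\frac{3a^2}{8}x^4$; (ii) $\dot x=-y+xy\pm\frac{\sqrt2}{2}x^2\mp\frac{2\sqrt2}{3}x^3\pm\frac{\sqrt2}{6}x^4$, $\dot y=x+6y^2\mp\sqrt2xy-\frac52x^2\mp\frac{9\sqrt2}{2}x^2y+\frac{13}{3}x^3\pm\frac{3\sqrt2}{2}x^3y-\frac43x^4$; (iii) $\dot x=-y\mp2\sqrt2xy+x^2\pm2\sqrt2x^3$, $\dot y=x\mp6\sqrt2y^2-2xy\pm2\sqrt2x^2\pm8\sqrt2x^2y+\frac{14}{3}x^3\mp2\sqrt2x^4$.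
   Context: For a real planar polynomial system $\dot x=-y+A(x,y)$, $\dot y=x+B(x,y)$, with $A,B$ polynomials having no terms of degree $<2$, the origin $O$ is an isochronous center if there is a punctured neighborhood of $O$ in which every orbit is a closed orbit surrounding $O$ and all these orbits have the same period. Zero Urabe function: write the system as $\dot x=p_0(x)+p_1(x)y$, $\dot y=q_0(x)+q_1(x)y+q_2(x)y^2$ ($p_0(0)=q_0(0)=0$, $p_1(0)\ne0$), where it holds that $-\frac{p_1'p_0}{p_1}+q_1+p_0'-\frac{2q_2p_0}{p_1}\equiv0$. Put $f=-\frac{q_2+p_1'}{p_1}$, $g=-\frac{q_2p_0^2}{p_1}+q_1p_0-p_1q_0$ (the change $z=p_0+p_1y$ gives $\dot x=z$, $\dot z=-g(x)-f(x)z^2$), $F(x)=\int_0^xf$, and $\xi$ near $0$ by $\frac12\xi(x)^2=\int_0^xg(s)e^{2F(s)}ds$, $x\xi(x)>0$ for $x\ne0$. The Urabe function of an isochronous center is the odd analytic $h$ with $\frac{\xi(x)}{1+h(\xi(x))}=g(x)e^{F(x)}$; "zero Urabe function" means $h\equiv0$, i.e. $\xi(x)=g(x)e^{F(x)}$ near $0$. *)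

theory Defs
  imports "HOL-Analysis.Analysis"
begin

type_synonym vfield = "real \<times> real \<Rightarrow> real \<times> real"

definition is_solution :: "vfield \<Rightarrow> (real \<Rightarrow> real \<times> real) \<Rightarrow> bool" where
  "is_solution V \<gamma> \<longleftrightarrow> (\<forall>t. (\<gamma> has_vector_derivative V (\<gamma> t)) (at t))"

definition isochronous_center :: "vfield \<Rightarrow> bool" where
  "isochronous_center V \<longleftrightarrow>
     (\<exists>U T. open U \<and> (0,0) \<in> U \<and> T > 0 \<and>
        (\<forall>p \<in> U - {(0,0)}.
           (\<exists>\<gamma>. is_solution V \<gamma> \<and> \<gamma> 0 = p) \<and>
           (\<forall>\<gamma>. is_solution V \<gamma> \<and> \<gamma> 0 = p \<longrightarrow>
               (\<forall>t. \<gamma> (t + T) = \<gamma> t) \<and>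
               (\<forall>s. 0 < s \<and> s < T \<longrightarrow> \<gamma> s \<noteq> p) \<and>
               (0,0) \<in> inside (\<gamma> ` {0..T}))))"

definition oint :: "real \<Rightarrow> real \<Rightarrow> (real \<Rightarrow> real) \<Rightarrow> real" where
  "oint a b h = (if a \<le> b then integral {a..b} h else - integral {b..a} h)"

definition zero_urabe_coeffs ::
  "(real \<Rightarrow> real) \<Rightarrow> (real \<Rightarrow> real) \<Rightarrow> (real \<Rightarrow> real) \<Rightarrow> (real \<Rightarrow> real) \<Rightarrow> (real \<Rightarrow> real) \<Rightarrow> bool" where
  "zero_urabe_coeffs p0 p1 q0 q1 q2 \<longleftrightarrow>
     (let f = (\<lambda>x. - (q2 x + deriv p1 x) / p1 x);
          g = (\<lambda>x. - q2 x * (p0 x)^2 / p1 x + q1 x * p0 x - p1 x * q0 x);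
          F = (\<lambda>x. oint 0 x f);
          \<xi> = (\<lambda>x. sgn x * sqrt (2 * oint 0 x (\<lambda>s. g s * exp (2 * F s))))
      in p0 0 = 0 \<and> q0 0 = 0 \<and> p1 0 \<noteq> 0 \<and>
         (\<exists>\<delta>>0. \<forall>x. \<bar>x\<bar> < \<delta> \<longrightarrow>
             - deriv p1 x * p0 x / p1 x + q1 x + deriv p0 x - 2 * q2 x * p0 x / p1 x = 0) \<and>
         (\<exists>\<delta>>0. \<forall>x. \<bar>x\<bar> < \<delta> \<longrightarrow> \<xi> x = g x * exp (F x)))"

definition zero_urabe :: "vfield \<Rightarrow> bool" where
  "zero_urabe V \<longleftrightarrow>
     (\<exists>p0 p1 q0 q1 q2.
        (\<forall>x y. V (x, y) = (p0 x + p1 x * y, q0 x + q1 x * y + q2 x * y^2)) \<and>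
        zero_urabe_coeffs p0 p1 q0 q1 q2)"

end

theory Submission
  imports Defs
begin

(* All systems of the theorem have the form
     x' = p0 x - w x * y,   y' = q0 x + q1 x * y - m k y^2,     w x = 1 + k x,
   with two polynomial identities: the Urabe-type relation w (q1 + p0') = (2m+1) k p0 and a
   relation forcing the function g of the definition of the Urabe function to equal
   G = (w^(m+1) - w)/(m k).  Then exp F = 1/E with E = w^(m+1), and the coordinate
   u = G/E satisfies u' = 1/E.  The map lin(x,y) = (u x, x'/E x) transforms every solution
   into a solution of the linear centre U' = Z, Z' = -U, and it has an explicit inverse
   lin_inv near the origin.  Hence near the origin all solutions are images of rotations:
   they are 2 pi-periodic, return to their start only after 2 pi, and enclose the origin.
   The same closed forms give xi = u = g e^F, i.e. a zero Urabe function. *)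

lemma oint_fundamental:
  assumes "\<And>t. min a b \<le> t \<Longrightarrow> t \<le> max a b \<Longrightarrow> (Fn has_real_derivative f t) (at t)"
  shows "oint a b f = Fn b - Fn a"
proof (cases "a \<le> b")
  case True
  have "(f has_integral (Fn b - Fn a)) {a..b}"
    by (rule fundamental_theorem_of_calculus[OF True])
      (use assms True in \<open>auto simp: has_real_derivative_iff_has_vector_derivative[symmetric]
        intro: has_field_derivative_at_within\<close>)
  then show ?thesis using True by (simp add: oint_def integral_unique)
next
  case False
  have "(f has_integral (Fn a - Fn b)) {b..a}"
    by (rule fundamental_theorem_of_calculus)
      (use assms False in \<open>auto simp: has_real_derivative_iff_has_vector_derivative[symmetric]
        intro: has_field_derivative_at_within\<close>)
  then show ?thesis using False by (simp add: oint_def integral_unique)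
qed

lemma has_vector_derivative_fst:
  "(g has_vector_derivative v) F \<Longrightarrow> ((\<lambda>t. fst (g t)) has_real_derivative fst v) F"
  by (auto simp: has_real_derivative_iff_has_vector_derivative has_vector_derivative_def
      dest: has_derivative_fst)

lemma has_vector_derivative_snd:
  "(g has_vector_derivative v) F \<Longrightarrow> ((\<lambda>t. snd (g t)) has_real_derivative snd v) F"
  by (auto simp: has_real_derivative_iff_has_vector_derivative has_vector_derivative_def
      dest: has_derivative_snd)

lemma solution_continuous: "is_solution V g \<Longrightarrow> continuous_on UNIV g"
  unfolding is_solution_def
  by (intro continuous_at_imp_continuous_on ballI has_vector_derivative_continuous) blast

lemma norm_pair_real: "norm (q::real\<times>real) = sqrt ((fst q)^2 + (snd q)^2)"
  by (cases q) (simp add: norm_Pair)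

lemma abs_fst_le: "\<bar>fst q\<bar> \<le> norm (q::real\<times>real)"
  by (metis norm_fst_le prod.collapse real_norm_def)

lemma open_closed_real_UNIV:
  fixes A :: "real set"
  assumes "open A" "closed A" "a \<in> A"
  shows "A = UNIV"
  using connectedD[OF connected_UNIV, of A "- A"] assms by (auto simp: open_Compl)

text \<open>A point of an open set D lies inside C if D is contained in a compact set K which is
  covered by D and C, with D disjoint from C: the component of the point in the complement
  of C cannot leave D, hence is bounded.\<close>
lemma mem_inside_of_compact_cover:
  assumes "open D" "compact K" "D \<subseteq> K" "K \<subseteq> D \<union> C" "D \<inter> C = {}" "z \<in> D"
  shows "z \<in> inside C"
proof -
  define Cc where "Cc = connected_component_set (- C) z"
  have zC: "z \<notin> C" using assms by blast
  have conn: "connected Cc" unfolding Cc_def by (rule connected_connected_component)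
  have cov: "Cc \<subseteq> D \<union> - K"
    using connected_component_subset[of "- C" z] assms(4) unfolding Cc_def by blast
  have dis: "D \<inter> - K \<inter> Cc = {}" using assms(3) by blast
  have "open (- K)" using assms(2) by (simp add: compact_imp_closed open_Compl)
  from connectedD[OF conn assms(1) this dis cov] have "D \<inter> Cc = {} \<or> - K \<inter> Cc = {}" .
  moreover have "z \<in> D \<inter> Cc" using zC assms(6) by (simp add: Cc_def)
  ultimately have "- K \<inter> Cc = {}" by blast
  then have "Cc \<subseteq> K" by blast
  then have "bounded Cc" using assms(2) by (metis bounded_subset compact_imp_bounded)
  then show ?thesis using zC unfolding inside_def Cc_def by simp
qed

text \<open>The flow of the linear centre U' = Z, Z' = -U, starting at c.\<close>
definition rot :: "real \<times> real \<Rightarrow> real \<Rightarrow> real \<times> real" where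
  "rot c t = (fst c * cos t + snd c * sin t, snd c * cos t - fst c * sin t)"

lemma sum_squares_rotated:
  "((a::real) * cc + b * ss)^2 + (b * cc - a * ss)^2 = (a^2 + b^2) * (ss^2 + cc^2)"
  by (simp add: power2_eq_square algebra_simps)

lemma norm_rot: "norm (rot c t) = norm c"
  using sum_squares_rotated[of "fst c" "cos t" "snd c" "sin t"]
  by (simp add: norm_pair_real rot_def)

lemma rot_0: "rot c 0 = c"
  by (simp add: rot_def)

lemma rot_rot: "rot (rot c s) t = rot c (s + t)"
  by (simp add: rot_def cos_add sin_add prod_eq_iff algebra_simps)

lemma rot_periodic: "rot c (t + 2*pi) = rot c t"
  by (simp add: rot_def)

lemma rot_fst_deriv: "((\<lambda>t. fst (rot c t)) has_real_derivative snd (rot c t)) (at t)"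
  unfolding rot_def by (auto intro!: derivative_eq_intros)

lemma rot_snd_deriv: "((\<lambda>t. snd (rot c t)) has_real_derivative - fst (rot c t)) (at t)"
  unfolding rot_def by (auto intro!: derivative_eq_intros simp: algebra_simps)

lemma rot_no_early_return:
  assumes "c \<noteq> 0" "0 < s" "s < 2*pi"
  shows "rot c s \<noteq> c"
proof
  assume ret: "rot c s = c"
  have r2: "(fst c)^2 + (snd c)^2 > 0"
    using assms(1) by (simp add: prod_eq_iff sum_power2_gt_zero_iff)
  have "((fst c)^2 + (snd c)^2) * cos s
      = fst c * fst (rot c s) + snd c * snd (rot c s)"
    by (simp add: rot_def power2_eq_square algebra_simps)
  also have "\<dots> = (fst c)^2 + (snd c)^2" by (simp add: ret power2_eq_square)
  finally have "cos s = 1" using r2 by force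
  then obtain n :: int where n: "s = n * 2 * pi" by (auto simp: cos_one_2pi_int)
  have "0 < real_of_int n * (2*pi)" "real_of_int n * (2*pi) < 1 * (2*pi)" using assms n by auto
  then have "0 < real_of_int n" "real_of_int n < 1"
    by (simp_all add: zero_less_mult_iff mult_less_cancel_right)
  then show False by simp
qed

lemma rot_onto_circle:
  assumes nq: "norm q = norm c" and c0: "c \<noteq> 0"
  shows "\<exists>t. 0 \<le> t \<and> t \<le> 2*pi \<and> rot c t = q"
proof -
  define r2 where "r2 = (fst c)^2 + (snd c)^2"
  have r2: "r2 > 0" using c0 by (simp add: r2_def prod_eq_iff sum_power2_gt_zero_iff)
  have qq: "(fst q)^2 + (snd q)^2 = r2" using nq by (simp add: norm_pair_real r2_def)
  define x where "x = (fst c * fst q + snd c * snd q) / r2"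
  define y where "y = (snd c * fst q - fst c * snd q) / r2"
  have "(fst c * fst q + snd c * snd q)^2 + (snd c * fst q - fst c * snd q)^2 = r2 * r2"
    using sum_squares_rotated[of "fst c" "fst q" "snd c" "snd q"] qq
    by (simp add: r2_def algebra_simps)
  moreover have "x^2 + y^2
      = ((fst c * fst q + snd c * snd q)^2 + (snd c * fst q - fst c * snd q)^2) / r2^2"
    unfolding x_def y_def power_divide by (rule add_divide_distrib[symmetric])
  ultimately have "x^2 + y^2 = 1" using r2 by (simp add: power2_eq_square)
  then obtain t where t: "0 \<le> t" "t < 2*pi" "x = cos t" "y = sin t" by (rule sincos_total_2pi)
  have e1: "fst c * (fst c * fst q + snd c * snd q) + snd c * (snd c * fst q - fst c * snd q)
      = r2 * fst q"
   and e2: "snd c * (fst c * fst q + snd c * snd q) - fst c * (snd c * fst q - fst c * snd q)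
      = r2 * snd q"
    by (simp_all add: r2_def power2_eq_square algebra_simps)
  have "fst c * x + snd c * y
      = (fst c * (fst c * fst q + snd c * snd q) + snd c * (snd c * fst q - fst c * snd q)) / r2"
    "snd c * x - fst c * y
      = (snd c * (fst c * fst q + snd c * snd q) - fst c * (snd c * fst q - fst c * snd q)) / r2"
    using r2 unfolding x_def y_def by (simp_all add: field_simps)
  then have "fst c * x + snd c * y = fst q" "snd c * x - fst c * y = snd q"
    using e1 e2 r2 by simp_all
  then have "rot c t = q" using t by (simp add: rot_def prod_eq_iff)
  then show ?thesis using t by auto
qed

text \<open>Rotating back by -t gives a
  curve with zero derivative.\<close>
lemma rotation_curve_unique:
  assumes S: "convex S" "t0 \<in> S" "t \<in> S"
    and h: "\<And>t. t \<in> S \<Longrightarrow> (h has_vector_derivative (snd (h t), - fst (h t))) (at t)"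
    and h0: "h t0 = rot c t0"
  shows "h t = rot c t"
proof -
  define Q where "Q t = rot (h t) (- t)" for t
  have d1: "((\<lambda>t. fst (h t)) has_real_derivative snd (h t)) (at t)"
    and d2: "((\<lambda>t. snd (h t)) has_real_derivative - fst (h t)) (at t)" if "t \<in> S" for t
    using has_vector_derivative_fst[OF h[OF that]] has_vector_derivative_snd[OF h[OF that]] by simp_all
  have Q1: "((\<lambda>t. fst (Q t)) has_real_derivative 0) (at t)" if "t \<in> S" for t
  proof -
    have "((\<lambda>t. fst (h t) * cos t - snd (h t) * sin t) has_real_derivative
        (snd (h t) * cos t + (- sin t) * fst (h t)) - (- fst (h t) * sin t + cos t * snd (h t))) (at t)"
      by (intro DERIV_diff DERIV_mult d1[OF that] d2[OF that] DERIV_cos DERIV_sin)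
    then show ?thesis by (simp add: Q_def rot_def algebra_simps)
  qed
  have Q2: "((\<lambda>t. snd (Q t)) has_real_derivative 0) (at t)" if "t \<in> S" for t
  proof -
    have "((\<lambda>t. snd (h t) * cos t + fst (h t) * sin t) has_real_derivative
        (- fst (h t) * cos t + (- sin t) * snd (h t)) + (snd (h t) * sin t + cos t * fst (h t))) (at t)"
      by (intro DERIV_add DERIV_mult d1[OF that] d2[OF that] DERIV_cos DERIV_sin)
    then show ?thesis by (simp add: Q_def rot_def algebra_simps)
  qed
  obtain c1 where c1: "\<forall>s\<in>S. fst (Q s) = c1"
    using has_field_derivative_zero_constant[OF S(1), of "\<lambda>t. fst (Q t)"] Q1
    by (blast intro: has_field_derivative_at_within)
  obtain c2 where c2: "\<forall>s\<in>S. snd (Q s) = c2"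
    using has_field_derivative_zero_constant[OF S(1), of "\<lambda>t. snd (Q t)"] Q2
    by (blast intro: has_field_derivative_at_within)
  have "Q t = Q t0" using c1 c2 S by (simp add: prod_eq_iff)
  also have "Q t0 = c" by (simp add: Q_def h0 rot_rot rot_0)
  finally have "rot (Q t) t = rot c t" by simp
  then show ?thesis by (simp add: Q_def rot_rot rot_0)
qed

text \<open>Algebra of the quotient rule used for the second component of the orbits of the family
  below: W, Ex, U, G stand for w, E, the first rotation coordinate and G, and the hypothesis K
  is the key identity of the family.\<close>
lemma quotient_rule_algebra:
  fixes W Wm Ex U Z d p G k M y yf :: real
  assumes W: "W \<noteq> 0" and Ex: "Ex = W * Wm" and UG: "U * Ex = G"
    and K: "W * (d * (p - W*y) - k*(p - W*y)*y - W*yf) - M*k*(p - W*y)^2 + W * G = 0"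
    and y: "y = (p - Z*Ex)/W"
  shows "((d * (Ex*Z) - (- U * Ex + M*k*Wm*(Ex*Z)*Z)) * W - (p - Z*Ex)*(k*(Ex*Z))) / (W*W) = yf"
proof -
  have z: "p - W*y = Z*Ex" "p - Z*Ex = W*y" using y W by (simp_all add: field_simps)
  have "(d * (Ex*Z) - (- U * Ex + M*k*Wm*(Ex*Z)*Z)) * W - (p - Z*Ex)*(k*(Ex*Z))
      = W * (d * (Z*Ex) - k*(Z*Ex)*y) - M*k*(Z*Ex)^2 + W * G"
    using UG z by (simp add: Ex power2_eq_square algebra_simps)
  also have "\<dots> = W * W * yf" using K unfolding z by (simp add: algebra_simps)
  finally show ?thesis using W by simp
qed

definition family_field ::
  "(real \<Rightarrow> real) \<Rightarrow> (real \<Rightarrow> real) \<Rightarrow> (real \<Rightarrow> real) \<Rightarrow> real \<Rightarrow> nat \<Rightarrow> vfield" where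
  "family_field p0 q0 q1 k m = (\<lambda>(x, y). (p0 x - (1 + k*x) * y, q0 x + q1 x * y - m*k*y^2))"

text \<open>The hypotheses: the Urabe-type relation between q1 and p0', and the identity saying that
  the function g of the Urabe construction equals ((1+kx)^(m+1) - (1+kx))/(m k).\<close>
locale urabe_family =
  fixes p0 dp0 q0 q1 :: "real \<Rightarrow> real" and k :: real and m :: nat
  assumes k_nonzero: "k \<noteq> 0" and m_pos: "1 \<le> m"
    and p0_deriv: "\<And>x. (p0 has_real_derivative dp0 x) (at x)"
    and p0_origin: "p0 0 = 0"
    and urabe_relation: "\<And>x. (1 + k*x) * (q1 x + dp0 x) = (2*m+1) * k * p0 x"
    and g_relation: "\<And>x. m*k * ((1 + k*x) * (q1 x * p0 x + (1 + k*x) * q0 x) - m*k * (p0 x)^2)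
                          = (1 + k*x)^2 * ((1 + k*x)^m - 1)"
begin

abbreviation "V \<equiv> family_field p0 q0 q1 k m"

definition "w x = 1 + k*x"
text \<open>E = exp(-F); G is the closed form of g; u = G/E is the linearising coordinate.\<close>
definition "E x = w x ^ (m+1)"
definition "G x = (w x ^ (m+1) - w x) / (m*k)"
definition "u x = G x / E x"
definition "u_inv U = ((1 - m*k*U) powr (-1/m) - 1) / k"
text \<open>The linearising map (x, y) \<mapsto> (u x, x'/E x) and its inverse.\<close>
definition "lin q = (u (fst q), (p0 (fst q) - w (fst q) * snd q) / E (fst q))"
definition "lin_inv q = (u_inv (fst q),
    (p0 (u_inv (fst q)) - snd q * E (u_inv (fst q))) / w (u_inv (fst q)))"
text \<open>Rotations of at most this radius stay in the domain of u_inv.\<close>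
definition "radius = 1 / (2*m*\<bar>k\<bar>)"

lemma m_real_pos: "real m > 0" using m_pos by simp

lemma u_alt: "w x \<noteq> 0 \<Longrightarrow> u x = (1 - 1 / w x ^ m) / (m*k)"
  using m_real_pos k_nonzero by (simp add: u_def G_def E_def field_simps)

lemma u_0: "u 0 = 0" by (simp add: u_def G_def E_def w_def)

lemma q0_origin: "q0 0 = 0"
  using g_relation[of 0] m_real_pos k_nonzero by (simp add: p0_origin)

text \<open>The equation g = G in terms of w.\<close>
lemma w_times_G: "w x * G x = w x * (q1 x * p0 x + w x * q0 x) - m*k*(p0 x)^2"
proof -
  have "m*k*(w x * G x) = w x ^2 * (w x ^ m - 1)"
    using m_real_pos k_nonzero by (simp add: G_def field_simps power2_eq_square)
  also have "\<dots> = m*k*(w x * (q1 x * p0 x + w x * q0 x) - m*k*(p0 x)^2)"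
    using g_relation[of x] by (simp add: w_def)
  finally show ?thesis using m_real_pos k_nonzero by simp
qed

text \<open>The key algebraic identity behind the linearisation: with z = x' = p0 - w y, the
  numerator of (z/E)' along the field equals -w G.\<close>
lemma key_identity:
  "w x * (dp0 x * (p0 x - w x * y) - k * (p0 x - w x * y) * y
     - w x * (q0 x + q1 x * y - m*k*y^2)) - (m+1)*k*(p0 x - w x * y)^2 + w x * G x = 0"
proof -
  have "w x * (dp0 x * (p0 x - w x * y) - k * (p0 x - w x * y) * y
     - w x * (q0 x + q1 x * y - m*k*y^2)) - (m+1)*k*(p0 x - w x * y)^2
     + w x * (q1 x * p0 x + w x * q0 x) - m*k*(p0 x)^2
     = (p0 x - w x * y) * (w x * (q1 x + dp0 x) - (2*m+1)*k*p0 x)"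
    unfolding w_def by (simp add: algebra_simps power2_eq_square)
  also have "\<dots> = 0" using urabe_relation[of x] by (simp add: w_def)
  finally show ?thesis using w_times_G[of x] by simp
qed

lemma w_u_inv: "w (u_inv U) = (1 - m*k*U) powr (-1/m)"
  using k_nonzero by (simp add: w_def u_inv_def)

lemma w_u_inv_pos: "1 - m*k*U > 0 \<Longrightarrow> w (u_inv U) > 0"
  by (simp add: w_u_inv)

lemma w_u_inv_pow: assumes "1 - m*k*U > 0" shows "w (u_inv U) ^ m = 1 / (1 - m*k*U)"
proof -
  have "w (u_inv U) ^ m = w (u_inv U) powr real m"
    using w_u_inv_pos[OF assms] by (simp add: powr_realpow)
  also have "\<dots> = (1 - m*k*U) powr (-1)" using m_real_pos by (simp add: w_u_inv powr_powr)
  also have "\<dots> = 1 / (1 - m*k*U)" using assms by (simp add: powr_minus divide_inverse)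
  finally show ?thesis .
qed

lemma u_u_inv: assumes "1 - m*k*U > 0" shows "u (u_inv U) = U"
  using w_u_inv_pos[OF assms] w_u_inv_pow[OF assms] m_real_pos k_nonzero
  by (simp add: u_alt)

lemma one_minus_u: "w x > 0 \<Longrightarrow> 1 - m*k*u x = 1 / w x ^ m"
  using m_real_pos k_nonzero by (simp add: u_alt)

lemma u_inv_u: assumes "w x > 0" shows "u_inv (u x) = x"
proof -
  have "1 / w x ^ m = w x powr (- real m)"
    using assms by (simp add: powr_minus powr_realpow divide_inverse)
  then have "w (u_inv (u x)) = w x"
    using m_real_pos assms by (simp add: w_u_inv one_minus_u powr_powr)
  then show ?thesis using k_nonzero by (simp add: w_def)
qed

lemma w_lin_inv: "1 - m*k*fst q > 0 \<Longrightarrow> w (fst (lin_inv q)) > 0"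
  by (simp add: lin_inv_def w_u_inv_pos)

lemma lin_lin_inv: assumes "1 - m*k*fst q > 0" shows "lin (lin_inv q) = q"
proof -
  have w: "w (u_inv (fst q)) > 0" using w_u_inv_pos[OF assms] .
  then have "E (u_inv (fst q)) > 0" by (simp add: E_def)
  then show ?thesis using w by (simp add: lin_def lin_inv_def u_u_inv[OF assms] field_simps)
qed

lemma lin_inv_lin: assumes "w (fst q) > 0" shows "lin_inv (lin q) = q"
proof -
  have "E (fst q) > 0" using assms by (simp add: E_def)
  then show ?thesis
    using assms by (simp add: lin_def lin_inv_def u_inv_u[OF assms] field_simps prod_eq_iff)
qed

lemma lin_origin: "lin (0,0) = (0,0)"
  by (simp add: lin_def u_0 w_def p0_origin)

lemma radius_pos: "radius > 0" using m_real_pos k_nonzero by (simp add: radius_def)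

lemma radius_domain:
  fixes q :: "real \<times> real"
  assumes "norm q \<le> radius" shows "1 - m*k*fst q > 0"
proof -
  have "\<bar>m*k*fst q\<bar> = m*\<bar>k\<bar>*\<bar>fst q\<bar>" using m_real_pos by (simp add: abs_mult)
  also have "\<dots> \<le> m*\<bar>k\<bar>*radius"
    using abs_fst_le[of q] assms m_real_pos by (intro mult_left_mono) auto
  also have "\<dots> = 1/2" using m_real_pos k_nonzero by (simp add: radius_def)
  finally show ?thesis by linarith
qed

lemma E_deriv: "(E has_real_derivative (m+1)*k*w x^m) (at x)"
proof -
  have "((\<lambda>x. (1+k*x)^(m+1)) has_real_derivative real (m+1) * (1+k*x)^(m+1-1) * (0 + k*1)) (at x)"
    by (rule derivative_eq_intros refl | simp)+
  then show ?thesis unfolding E_def[abs_def] w_def by (simp add: algebra_simps)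
qed

lemma G_deriv: "(G has_real_derivative ((m+1)*k*w x^m - k)/(m*k)) (at x)"
proof -
  have G: "G = (\<lambda>x. (E x - w x)/(m*k))" by (auto simp: G_def E_def)
  show ?thesis unfolding G unfolding w_def[abs_def]
    using m_real_pos k_nonzero
    by (auto intro!: derivative_eq_intros E_deriv[unfolded w_def] simp: field_simps)
qed

text \<open>u' = 1/E = exp F.\<close>
lemma u_deriv: assumes "w x > 0" shows "(u has_real_derivative 1 / E x) (at x)"
proof -
  have E0: "E x \<noteq> 0" using assms by (simp add: E_def)
  have "(u has_real_derivative
     (((m+1)*k*w x^m - k)/(m*k) * E x - G x * ((m+1)*k*w x^m)) / (E x * E x)) (at x)"
    unfolding u_def[abs_def] using E0 by (auto intro!: derivative_eq_intros G_deriv E_deriv)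
  moreover have "(((m+1)*k*w x^m - k)/(m*k) * E x - G x * ((m+1)*k*w x^m)) / (E x * E x)
      = 1 / E x"
    using m_real_pos k_nonzero assms by (simp add: E_def G_def field_simps)
  ultimately show ?thesis by simp
qed

lemma u_inv_deriv: assumes "1 - m*k*U > 0"
  shows "(u_inv has_real_derivative E (u_inv U)) (at U)"
proof -
  have pd: "(1 - m*k*U) powr (-(1/m) - 1) = (1 - m*k*U) powr (-(1/m)) / (1 - m*k*U)"
    by (subst powr_diff) (use assms in simp)
  have E: "E (u_inv U) = (1 - m*k*U) powr (-1/m) / (1 - m*k*U)"
  proof -
    have "E (u_inv U) = w (u_inv U) * w (u_inv U) ^ m" by (simp add: E_def)
    then show ?thesis by (simp only: w_u_inv_pow[OF assms]) (simp add: w_u_inv)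
  qed
  have mk: "(- (m*k)) * (-1/m) = k" using m_real_pos by simp
  have "(u_inv has_real_derivative
      ((1 - m*k*U) powr (-1/m) * ((- (m*k)) * (-1/m) / (1 - m*k*U))) / k) (at U)"
    unfolding u_inv_def[abs_def] using assms pd by (auto intro!: derivative_eq_intros)
  then show ?thesis using E mk k_nonzero by simp
qed

text \<open>Chain rules for the building blocks, in the shape used with derivative_eq_intros.\<close>
lemma p0_chain: "(f has_real_derivative f') (at t) \<Longrightarrow> D = dp0 (f t) * f'
   \<Longrightarrow> ((\<lambda>t. p0 (f t)) has_real_derivative D) (at t)"
  using DERIV_chain2[OF p0_deriv] by blast

lemma E_chain: "(f has_real_derivative f') (at t) \<Longrightarrow> D = (m+1)*k*w (f t)^m * f'
   \<Longrightarrow> ((\<lambda>t. E (f t)) has_real_derivative D) (at t)"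
  using DERIV_chain2[OF E_deriv] by blast

lemma w_chain: "(f has_real_derivative f') (at t) \<Longrightarrow> D = k * f'
   \<Longrightarrow> ((\<lambda>t. w (f t)) has_real_derivative D) (at t)"
  unfolding w_def by (auto intro!: derivative_eq_intros)

lemma u_inv_chain: "(f has_real_derivative f') (at t) \<Longrightarrow> 1 - m*k*f t > 0
   \<Longrightarrow> D = E (u_inv (f t)) * f' \<Longrightarrow> ((\<lambda>t. u_inv (f t)) has_real_derivative D) (at t)"
  using DERIV_chain2[OF u_inv_deriv] by blast

lemma isCont_lin: assumes "w (fst q) > 0" shows "isCont lin q"
proof -
  have f: "isCont fst q" by (simp add: isCont_fst[OF continuous_ident])
  have "isCont (\<lambda>q. u (fst q)) q" by (rule isCont_o2[OF f DERIV_isCont[OF u_deriv[OF assms]]])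
  moreover have "isCont (\<lambda>q. p0 (fst q)) q" "isCont (\<lambda>q. E (fst q)) q"
    by (rule isCont_o2[OF f DERIV_isCont[OF p0_deriv]] isCont_o2[OF f DERIV_isCont[OF E_deriv]])+
  moreover have "E (fst q) \<noteq> 0" using assms by (simp add: E_def)
  ultimately show ?thesis unfolding lin_def[abs_def] w_def by (intro continuous_intros) auto
qed

lemma isCont_lin_inv: assumes "1 - m*k*fst q > 0" shows "isCont lin_inv q"
proof -
  have f: "isCont fst q" by (simp add: isCont_fst[OF continuous_ident])
  have c0: "isCont (\<lambda>q. u_inv (fst q)) q"
    by (rule isCont_o2[OF f DERIV_isCont[OF u_inv_deriv[OF assms]]])
  have "isCont (\<lambda>q. p0 (u_inv (fst q))) q" "isCont (\<lambda>q. E (u_inv (fst q))) q"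
    by (rule isCont_o2[OF c0 DERIV_isCont[OF p0_deriv]] isCont_o2[OF c0 DERIV_isCont[OF E_deriv]])+
  moreover have "w (u_inv (fst q)) \<noteq> 0" using w_u_inv_pos[OF assms] by simp
  ultimately show ?thesis unfolding lin_inv_def[abs_def] w_def using c0
    by (intro continuous_intros) auto
qed

text \<open>The derivative of the second component of lin along the field is -u.\<close>
lemma lin_snd_deriv_value:
  fixes x y :: real
  defines "z \<equiv> p0 x - w x * y" and "y' \<equiv> q0 x + q1 x * y - m*k*y^2"
  assumes "w x > 0"
  shows "((dp0 x * z - (k * z * y + w x * y')) * E x - (p0 x - w x * y) * ((m+1)*k*w x^m * z))
      / (E x * E x) = - u x"
proof -
  have "(dp0 x * z - (k * z * y + w x * y')) * E x - (p0 x - w x * y) * ((m+1)*k*w x^m * z)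
     = w x ^ m * (w x * (dp0 x * z - k * z * y - w x * y') - (m+1)*k*z^2)"
    by (simp add: E_def z_def algebra_simps power2_eq_square)
  also have "w x * (dp0 x * z - k * z * y - w x * y') - (m+1)*k*z^2 = - (w x * G x)"
    using key_identity[of x y] unfolding z_def y'_def by linarith
  finally have num: "(dp0 x * z - (k * z * y + w x * y')) * E x
      - (p0 x - w x * y) * ((m+1)*k*w x^m * z) = - (E x * G x)"
    by (simp add: E_def)
  have "E x \<noteq> 0" using assms by (simp add: E_def)
  then show ?thesis unfolding num by (simp add: u_def)
qed

lemma lin_along_solution:
  assumes g: "(g has_vector_derivative V (g t)) (at t)" and wpos: "w (fst (g t)) > 0"
  shows "((\<lambda>t. lin (g t)) has_vector_derivative (snd (lin (g t)), - fst (lin (g t)))) (at t)"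
proof -
  define x where "x = fst (g t)"
  define y where "y = snd (g t)"
  have gt: "g t = (x, y)" by (simp add: x_def y_def)
  have Vg: "V (g t) = (p0 x - w x * y, q0 x + q1 x * y - m*k*y^2)"
    by (simp add: gt family_field_def w_def)
  have dx: "((\<lambda>t. fst (g t)) has_real_derivative (p0 x - w x * y)) (at t)"
    using has_vector_derivative_fst[OF g] Vg by simp
  have dy: "((\<lambda>t. snd (g t)) has_real_derivative (q0 x + q1 x * y - m*k*y^2)) (at t)"
    using has_vector_derivative_snd[OF g] Vg by simp
  have w: "w x > 0" using wpos by (simp add: x_def)
  have E0: "E x \<noteq> 0" using w by (simp add: E_def)
  have d1: "((\<lambda>t. u (fst (g t))) has_real_derivative (1 / E x) * (p0 x - w x * y)) (at t)"
    using DERIV_chain2[OF u_deriv[OF wpos] dx] by (simp add: x_def)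
  have d2: "((\<lambda>t. (p0 (fst (g t)) - w (fst (g t)) * snd (g t)) / E (fst (g t))) has_real_derivative
     ((dp0 x * (p0 x - w x * y) - (k * (p0 x - w x * y) * y + w x * (q0 x + q1 x * y - m*k*y^2))) * E x
       - (p0 x - w x * y) * ((m+1)*k*w x^m * (p0 x - w x * y))) / (E x * E x)) (at t)"
    unfolding x_def y_def
    by (rule derivative_eq_intros p0_chain E_chain w_chain dx[unfolded x_def y_def]
        dy[unfolded x_def y_def] refl | (use E0 in \<open>simp add: x_def\<close>))+
  show ?thesis
    using has_vector_derivative_Pair[OF d1[unfolded has_real_derivative_iff_has_vector_derivative]
       d2[unfolded has_real_derivative_iff_has_vector_derivative lin_snd_deriv_value[OF w]]]
    by (simp add: lin_def gt)
qed

definition "orbit c t = lin_inv (rot c t)"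

lemma orbit_domain: "norm c < radius \<Longrightarrow> 1 - m*k*fst (rot c t) > 0"
  by (rule radius_domain) (simp add: norm_rot)

lemma lin_orbit: "norm c < radius \<Longrightarrow> lin (orbit c t) = rot c t"
  unfolding orbit_def by (rule lin_lin_inv[OF orbit_domain])

lemma w_orbit: "norm c < radius \<Longrightarrow> w (fst (orbit c t)) > 0"
  unfolding orbit_def by (rule w_lin_inv[OF orbit_domain])

lemma orbit_deriv:
  assumes c: "norm c < radius"
  shows "(orbit c has_vector_derivative V (orbit c t)) (at t)"
proof -
  let ?U = "fst (rot c t)"
  let ?x = "u_inv ?U"
  let ?y = "(p0 ?x - snd (rot c t) * E ?x) / w ?x"
  have dom: "1 - m*k*?U > 0" by (rule orbit_domain[OF c])
  have wx: "w ?x > 0" by (rule w_u_inv_pos[OF dom])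
  have dx: "((\<lambda>t. u_inv (fst (rot c t))) has_real_derivative E ?x * snd (rot c t)) (at t)"
    by (rule u_inv_chain[OF rot_fst_deriv]) (use dom in simp_all)
  have "G ?x = u ?x * E ?x" using wx by (simp add: u_def E_def)
  then have UG: "?U * E ?x = G ?x" by (simp add: u_u_inv[OF dom])
  have dy: "((\<lambda>t. (p0 (u_inv (fst (rot c t))) - snd (rot c t) * E (u_inv (fst (rot c t))))
      / w (u_inv (fst (rot c t)))) has_real_derivative q0 ?x + q1 ?x * ?y - m*k*?y^2) (at t)"
    apply (rule derivative_eq_intros p0_chain E_chain w_chain dx rot_snd_deriv refl)+
    using wx apply simp
    apply (rule quotient_rule_algebra[OF _ _ UG key_identity])
    using wx by (simp_all add: E_def)
  have "(orbit c has_vector_derivative (E ?x * snd (rot c t), q0 ?x + q1 ?x * ?y - m*k*?y^2)) (at t)"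
    unfolding orbit_def[abs_def] lin_inv_def
    using has_vector_derivative_Pair[OF dx[unfolded has_real_derivative_iff_has_vector_derivative]
       dy[unfolded has_real_derivative_iff_has_vector_derivative]] by simp
  moreover have "V (orbit c t) = (E ?x * snd (rot c t), q0 ?x + q1 ?x * ?y - m*k*?y^2)"
    using wx by (simp add: orbit_def lin_inv_def family_field_def flip: w_def)
  ultimately show ?thesis by simp
qed

lemma orbit_is_solution: "norm c < radius \<Longrightarrow> is_solution V (orbit c)"
  unfolding is_solution_def using orbit_deriv by blast

text \<open>Every solution through a point of an orbit is that orbit: the set of times where they agree
  is closed, and open because lin takes the solution to a rotation near each such time.\<close>
lemma orbit_unique:
  assumes c: "norm c < radius" and g: "is_solution V g" and g0: "g 0 = orbit c 0"
  shows "g t = orbit c t"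
proof -
  define A where "A = {t. g t = orbit c t}"
  have g_cont: "continuous_on UNIV g" by (rule solution_continuous[OF g])
  have g_deriv: "(g has_vector_derivative V (g s)) (at s)" for s
    using g by (simp add: is_solution_def)
  have "closed A" unfolding A_def
    by (rule closed_Collect_eq[OF g_cont solution_continuous[OF orbit_is_solution[OF c]]])
  moreover have "open A"
    unfolding open_contains_ball
  proof
    fix t0 assume "t0 \<in> A"
    then have gt0: "g t0 = orbit c t0" by (simp add: A_def)
    define S where "S = g -` {q. w (fst q) > 0}"
    have "open {q::real\<times>real. w (fst q) > 0}"
      unfolding w_def by (intro open_Collect_less continuous_intros)
    then have "open S" unfolding S_def using g_cont by (rule open_vimage)
    moreover have "t0 \<in> S" using w_orbit[OF c] gt0 by (simp add: S_def)
    ultimately obtain e where e: "e > 0" "ball t0 e \<subseteq> S" using open_contains_ball by blast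
    have "t \<in> A" if t: "t \<in> ball t0 e" for t
    proof -
      have "lin (g t) = rot c t"
      proof (rule rotation_curve_unique[of "ball t0 e" t0 t])
        show "convex (ball t0 e)" "t0 \<in> ball t0 e" "t \<in> ball t0 e" using e t by simp_all
        show "((\<lambda>t. lin (g t)) has_vector_derivative (snd (lin (g s)), - fst (lin (g s)))) (at s)"
          if "s \<in> ball t0 e" for s
          using lin_along_solution[OF g_deriv] e that by (auto simp: S_def)
        show "lin (g t0) = rot c t0" using gt0 lin_orbit[OF c] by simp
      qed
      moreover have "w (fst (g t)) > 0" using e t by (auto simp: S_def)
      ultimately show ?thesis using lin_inv_lin[of "g t"] by (simp add: A_def orbit_def)
    qed
    then show "\<exists>e>0. ball t0 e \<subseteq> A" using e(1) by blast
  qed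
  moreover have "0 \<in> A" using g0 by (simp add: A_def)
  ultimately have "A = UNIV" using open_closed_real_UNIV by blast
  then show ?thesis by (auto simp: A_def)
qed

definition "disc r = {q. w (fst q) > 0 \<and> norm (lin q) < r}"

lemma open_disc: "open (disc r)"
proof -
  have "continuous_on {q. w (fst q) > 0} lin"
    by (intro continuous_at_imp_continuous_on ballI isCont_lin) simp
  moreover have "open {q. w (fst q) > 0}" unfolding w_def by (intro open_Collect_less continuous_intros)
  moreover have "disc r = {q. w (fst q) > 0} \<inter> lin -` ball 0 r" by (auto simp: disc_def)
  ultimately show ?thesis using continuous_open_preimage[OF _ _ open_ball] by metis
qed

lemma origin_in_disc: "r > 0 \<Longrightarrow> (0,0) \<in> disc r"
  by (simp add: disc_def lin_origin w_def)

text \<open>A nontrivial orbit encloses the origin: the disc of radius norm c is open, lies in the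
  compact image of the closed disc under lin_inv, and that image is covered by the disc and
  the orbit.\<close>
lemma orbit_encloses_origin:
  assumes c: "norm c < radius" "c \<noteq> 0"
  shows "(0,0) \<in> inside (orbit c ` {0..2*pi})"
proof -
  let ?r = "norm c" and ?K = "lin_inv ` cball 0 (norm c)" and ?C = "orbit c ` {0..2*pi}"
  have "continuous_on (cball 0 ?r) lin_inv"
    using c by (intro continuous_at_imp_continuous_on ballI isCont_lin_inv radius_domain) auto
  then have compact: "compact ?K" by (rule compact_continuous_image[OF _ compact_cball])
  have disc_sub: "disc ?r \<subseteq> ?K"
  proof
    fix q assume "q \<in> disc ?r"
    then show "q \<in> ?K" using lin_inv_lin by (intro image_eqI[of _ _ "lin q"]) (auto simp: disc_def)
  qed
  have cover: "?K \<subseteq> disc ?r \<union> ?C"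
  proof
    fix q assume "q \<in> ?K"
    then obtain q' where q': "norm q' \<le> ?r" "q = lin_inv q'" by auto
    have dom: "1 - m*k*fst q' > 0" using q' c by (intro radius_domain) auto
    show "q \<in> disc ?r \<union> ?C"
    proof (cases "norm q' < ?r")
      case True
      then show ?thesis using w_lin_inv[OF dom] lin_lin_inv[OF dom] q' by (simp add: disc_def)
    next
      case False
      then obtain t where "0 \<le> t" "t \<le> 2*pi" "rot c t = q'"
        using rot_onto_circle[of q' c] c q' by auto
      then show ?thesis using q' by (auto simp: orbit_def)
    qed
  qed
  have "norm (lin (orbit c t)) = ?r" for t by (simp add: lin_orbit[OF c(1)] norm_rot)
  then have disjoint: "disc ?r \<inter> ?C = {}" by (auto simp: disc_def)
  show ?thesis
    using c by (intro mem_inside_of_compact_cover[OF open_disc compact disc_sub cover disjoint])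
      (simp add: origin_in_disc)
qed

lemma disc_point_on_orbit:
  assumes p: "p \<in> disc radius - {(0,0)}"
  shows "norm (lin p) < radius" "lin p \<noteq> 0" "orbit (lin p) 0 = p"
proof -
  have wp: "w (fst p) > 0" using p by (simp add: disc_def)
  show "norm (lin p) < radius" using p by (simp add: disc_def)
  show "orbit (lin p) 0 = p" by (simp add: orbit_def rot_0 lin_inv_lin[OF wp])
  show "lin p \<noteq> 0"
  proof
    assume "lin p = 0"
    then have "lin_inv (lin p) = lin_inv (lin (0,0))" by (simp add: lin_origin zero_prod_def)
    then have "p = (0,0)" using lin_inv_lin[OF wp] lin_inv_lin[of "(0,0)"] by (simp add: w_def)
    then show False using p by simp
  qed
qed

lemma solution_is_orbit:
  assumes "p \<in> disc radius - {(0,0)}" "is_solution V \<gamma>" "\<gamma> 0 = p"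
  shows "\<gamma> = orbit (lin p)"
  using orbit_unique[OF disc_point_on_orbit(1)[OF assms(1)] assms(2)]
    disc_point_on_orbit(3)[OF assms(1)] assms(3) by auto

theorem isochronous: "isochronous_center V"
  unfolding isochronous_center_def
proof (intro exI[of _ "disc radius"] exI[of _ "2*pi"] conjI ballI allI impI)
  show "open (disc radius)" "(0,0) \<in> disc radius" "(0::real) < 2*pi"
    by (simp_all add: open_disc origin_in_disc radius_pos)
next
  fix p assume "p \<in> disc radius - {(0,0)}"
  then show "\<exists>\<gamma>. is_solution V \<gamma> \<and> \<gamma> 0 = p"
    using orbit_is_solution disc_point_on_orbit by blast
next
  fix p \<gamma> t assume "p \<in> disc radius - {(0,0)}" "is_solution V \<gamma> \<and> \<gamma> 0 = p"
  then have "\<gamma> = orbit (lin p)" using solution_is_orbit by blast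
  then show "\<gamma> (t + 2*pi) = \<gamma> t" by (simp add: orbit_def rot_periodic)
next
  fix p \<gamma> s assume p: "p \<in> disc radius - {(0,0)}" and "is_solution V \<gamma> \<and> \<gamma> 0 = p"
    and s: "0 < s \<and> s < 2*pi"
  then have \<gamma>: "\<gamma> = orbit (lin p)" using solution_is_orbit by blast
  show "\<gamma> s \<noteq> p"
  proof
    assume "\<gamma> s = p"
    then have "lin (orbit (lin p) s) = lin p" using \<gamma> by simp
    then have "rot (lin p) s = lin p" using lin_orbit[OF disc_point_on_orbit(1)[OF p]] by simp
    then show False using rot_no_early_return[OF disc_point_on_orbit(2)[OF p]] s by blast
  qed
next
  fix p \<gamma> assume p: "p \<in> disc radius - {(0,0)}" and "is_solution V \<gamma> \<and> \<gamma> 0 = p"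
  then have "\<gamma> = orbit (lin p)" using solution_is_orbit by blast
  then show "(0,0) \<in> inside (\<gamma> ` {0..2*pi})"
    using orbit_encloses_origin disc_point_on_orbit[OF p] by simp
qed

definition "p1 x = - w x"
definition "q2 (x::real) = - (m*k)"
definition "urabe_f x = - (q2 x + deriv p1 x) / p1 x"
definition "urabe_g x = - q2 x * (p0 x)^2 / p1 x + q1 x * p0 x - p1 x * q0 x"
definition "urabe_F x = oint 0 x urabe_f"

lemma deriv_p1: "deriv p1 x = - k"
  unfolding p1_def w_def by (rule DERIV_imp_deriv) (auto intro!: derivative_eq_intros)

lemma w_pos_near_origin: assumes "\<bar>x\<bar> < 1 / \<bar>k\<bar>" shows "w x > 0"
proof -
  have "\<bar>k * x\<bar> < 1" using assms k_nonzero by (simp add: abs_mult field_simps)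
  then show ?thesis by (simp add: w_def)
qed

lemma urabe_g_eq_G: "w x > 0 \<Longrightarrow> urabe_g x = G x"
  using w_times_G[of x] by (simp add: urabe_g_def p1_def q2_def field_simps power2_eq_square)

text \<open>F = -(m+1) ln w, hence exp F = 1/E.\<close>
lemma urabe_F_closed_form:
  assumes x: "\<bar>x\<bar> < 1 / \<bar>k\<bar>"
  shows "exp (urabe_F x) = 1 / E x"
proof -
  have "urabe_F x = - (real (m+1) * ln (w x)) - - (real (m+1) * ln (w 0))"
    unfolding urabe_F_def
  proof (rule oint_fundamental)
    fix t assume "min 0 x \<le> t" "t \<le> max 0 x"
    then have wt: "w t > 0" using x by (intro w_pos_near_origin) auto
    have "((\<lambda>t. - (real (m+1) * ln (w t))) has_real_derivative - (real (m+1) * (k / w t))) (at t)"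
      unfolding w_def using wt by (auto intro!: derivative_eq_intros simp: w_def)
    moreover have "- (real (m+1) * (k / w t)) = urabe_f t"
      using wt by (simp add: urabe_f_def deriv_p1 p1_def q2_def field_simps)
    ultimately show "((\<lambda>t. - (real (m+1) * ln (w t))) has_real_derivative urabe_f t) (at t)" by simp
  qed
  then have "urabe_F x = - (real (m+1) * ln (w x))" by (simp add: w_def)
  moreover have "exp (real (m+1) * ln (w x)) = E x"
    by (subst exp_of_nat_mult) (simp add: w_pos_near_origin[OF x] E_def)
  ultimately show ?thesis by (simp add: exp_minus divide_inverse)
qed

text \<open>The integral defining xi equals u^2/2, since (u^2/2)' = u/E = g exp(2F).\<close>
lemma xi_integral:
  assumes x: "\<bar>x\<bar> < 1 / \<bar>k\<bar>"
  shows "oint 0 x (\<lambda>s. urabe_g s * exp (2 * urabe_F s)) = (u x)^2 / 2"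
proof -
  have "oint 0 x (\<lambda>s. urabe_g s * exp (2 * urabe_F s)) = (u x)^2 / 2 - (u 0)^2 / 2"
  proof (rule oint_fundamental)
    fix t assume "min 0 x \<le> t" "t \<le> max 0 x"
    then have tt: "\<bar>t\<bar> < 1 / \<bar>k\<bar>" using x by auto
    note wt = w_pos_near_origin[OF tt]
    have "exp (2 * urabe_F t) = exp (urabe_F t) * exp (urabe_F t)"
      by (simp only: mult_2 exp_add)
    then have "exp (2 * urabe_F t) = (1 / E t)^2"
      by (simp only: urabe_F_closed_form[OF tt] power2_eq_square)
    then have "(2 * u t * (1 / E t)) / 2 = urabe_g t * exp (2 * urabe_F t)"
      using urabe_g_eq_G[OF wt] by (simp add: u_def power2_eq_square)
    moreover have "((\<lambda>t. (u t)^2 / 2) has_real_derivative (2 * u t * (1 / E t)) / 2) (at t)"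
      using DERIV_cdivide[OF DERIV_power[OF u_deriv[OF wt], of 2], of 2] by simp
    ultimately show "((\<lambda>t. (u t)^2 / 2) has_real_derivative urabe_g t * exp (2 * urabe_F t)) (at t)"
      by simp
  qed
  then show ?thesis by (simp add: u_0)
qed

text \<open>u has the sign of x, so the square root with sign sgn x recovers u.\<close>
lemma sgn_abs_u: assumes "w x > 0" shows "sgn x * \<bar>u x\<bar> = u x"
proof (cases "x = 0")
  case True then show ?thesis by (simp add: u_0)
next
  case False
  have pos: "(w x ^ m - 1) * (w x - 1) > 0"
  proof (cases "w x > 1")
    case True
    then show ?thesis using m_pos by (simp add: one_less_power)
  next
    case False
    have "k * x \<noteq> 0" using \<open>x \<noteq> 0\<close> k_nonzero by simp
    then have "w x < 1" using False unfolding w_def by linarith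
    moreover have "w x ^ m < 1" using m_pos assms \<open>w x < 1\<close> by (simp add: power_less_one_iff)
    ultimately show ?thesis by (simp add: mult_neg_neg)
  qed
  have "u x * x = (w x ^ m - 1) * (w x - 1) / (m * k^2 * w x ^ m)"
    using assms m_real_pos k_nonzero by (simp add: u_alt w_def field_simps power2_eq_square)
  also have "\<dots> > 0" using pos assms m_real_pos k_nonzero by (intro divide_pos_pos) auto
  finally have "sgn x = sgn (u x)" by (auto simp: zero_less_mult_iff sgn_if)
  then show ?thesis by (simp add: sgn_mult_abs)
qed

theorem zero_urabe_function: "zero_urabe V"
  unfolding zero_urabe_def
proof (intro exI conjI)
  show "\<forall>x y. V (x, y) = (p0 x + p1 x * y, q0 x + q1 x * y + q2 x * y^2)"
    by (simp add: family_field_def p1_def q2_def w_def algebra_simps)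
  have d: "1 / \<bar>k\<bar> > 0" using k_nonzero by simp
  have "- deriv p1 x * p0 x / p1 x + q1 x + deriv p0 x - 2 * q2 x * p0 x / p1 x = 0"
    if "\<bar>x\<bar> < 1 / \<bar>k\<bar>" for x
    using urabe_relation[of x] w_pos_near_origin[OF that] m_real_pos
    by (simp add: deriv_p1 DERIV_imp_deriv[OF p0_deriv] p1_def q2_def w_def field_simps)
  moreover have "sgn x * sqrt (2 * oint 0 x (\<lambda>s. urabe_g s * exp (2 * urabe_F s)))
      = urabe_g x * exp (urabe_F x)" if "\<bar>x\<bar> < 1 / \<bar>k\<bar>" for x
  proof -
    have "sgn x * sqrt (2 * oint 0 x (\<lambda>s. urabe_g s * exp (2 * urabe_F s))) = sgn x * \<bar>u x\<bar>"
      by (simp add: xi_integral[OF that])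
    also have "\<dots> = u x" by (rule sgn_abs_u[OF w_pos_near_origin[OF that]])
    also have "\<dots> = urabe_g x * exp (urabe_F x)"
      using urabe_g_eq_G[OF w_pos_near_origin[OF that]] urabe_F_closed_form[OF that]
      by (simp add: u_def)
    finally show ?thesis .
  qed
  ultimately show "zero_urabe_coeffs p0 p1 q0 q1 q2"
    unfolding zero_urabe_coeffs_def Let_def urabe_f_def[symmetric] urabe_g_def[symmetric]
      urabe_F_def[symmetric]
    using d p0_origin q0_origin by (auto simp: p1_def w_def intro!: exI[of _ "1 / \<bar>k\<bar>"])
qed

end

theorem family_isochronous_zero_urabe:
  assumes "urabe_family p0 dp0 q0 q1 k m"
  shows "isochronous_center (family_field p0 q0 q1 k m) \<and> zero_urabe (family_field p0 q0 q1 k m)"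
  using urabe_family.isochronous[OF assms] urabe_family.zero_urabe_function[OF assms] by blast


lemma system_i:
  fixes a :: real
  defines "S \<equiv> \<lambda>(x, y). (- y + x * y - 3 * a / 4 * x^2 + a * x^3 - a / 4 * x^4,
                    x + 3 * y^2 + 3 * a / 2 * x * y - x^2 + 9 * a / 4 * x^2 * y
                      + (1/3 + 9/8 * a^2) * x^3 - 3 * a / 4 * x^3 * y - 3 * a^2 / 8 * x^4)"
  shows "isochronous_center S \<and> zero_urabe S"
proof -
  define p0 where "p0 x = - 3 * a / 4 * x^2 + a * x^3 - a / 4 * x^4" for x :: real
  define q0 where "q0 x = x - x^2 + (1/3 + 9/8 * a^2) * x^3 - 3 * a^2 / 8 * x^4" for x :: real
  define q1 where "q1 x = 3 * a / 2 * x + 9 * a / 4 * x^2 - 3 * a / 4 * x^3" for x :: real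
  have "urabe_family p0 (\<lambda>x. - 3 * a / 2 * x + 3 * a * x^2 - a * x^3) q0 q1 (-1) 3"
  proof
    show "(p0 has_real_derivative - 3 * a / 2 * x + 3 * a * x^2 - a * x^3) (at x)" for x
      unfolding p0_def[abs_def]
      by (auto intro!: derivative_eq_intros simp: algebra_simps power2_eq_square power3_eq_cube)
    show "(1 + - 1 * x) * (q1 x + (- 3 * a / 2 * x + 3 * a * x^2 - a * x^3))
      = real (2 * 3 + 1) * - 1 * p0 x" for x
      unfolding p0_def q1_def by simp algebra
    show "real 3 * - 1 * ((1 + - 1 * x) * (q1 x * p0 x + (1 + - 1 * x) * q0 x)
      - real 3 * - 1 * (p0 x)^2) = (1 + - 1 * x)^2 * ((1 + - 1 * x)^3 - 1)" for x
      unfolding p0_def q0_def q1_def by simp algebra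
  qed (simp_all add: p0_def)
  moreover have "S = family_field p0 q0 q1 (-1) 3"
    by (auto simp: S_def family_field_def p0_def q0_def q1_def fun_eq_iff algebra_simps)
  ultimately show ?thesis by (simp add: family_isochronous_zero_urabe)
qed

text \<open>Systems (ii) and (iii) involve c = \<plusminus>sqrt 2; the required identities hold modulo c^2 = 2.\<close>
lemma system_ii:
  fixes s :: real
  assumes s: "s \<in> {1, -1}"
  defines "S \<equiv> \<lambda>(x, y). (- y + x * y + s * sqrt 2 / 2 * x^2 - s * 2 * sqrt 2 / 3 * x^3 + s * sqrt 2 / 6 * x^4,
                    x + 6 * y^2 - s * sqrt 2 * x * y - 5/2 * x^2 - s * 9 * sqrt 2 / 2 * x^2 * y
                      + 13/3 * x^3 + s * 3 * sqrt 2 / 2 * x^3 * y - 4/3 * x^4)"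
  shows "isochronous_center S \<and> zero_urabe S"
proof -
  define c where "c = s * sqrt 2"
  have c2: "c^2 = 2" using s by (auto simp: c_def power_mult_distrib)
  define p0 where "p0 x = c/2*x^2 - 2*c/3*x^3 + c/6*x^4" for x :: real
  define q0 where "q0 x = x - 5/2*x^2 + 13/3*x^3 - 4/3*x^4" for x :: real
  define q1 where "q1 x = - c*x - 9*c/2*x^2 + 3*c/2*x^3" for x :: real
  have "urabe_family p0 (\<lambda>x. c*x - 2*c*x^2 + 2*c/3*x^3) q0 q1 (-1) 6"
  proof
    show "(p0 has_real_derivative c*x - 2*c*x^2 + 2*c/3*x^3) (at x)" for x
      unfolding p0_def[abs_def]
      by (auto intro!: derivative_eq_intros simp: algebra_simps power2_eq_square power3_eq_cube)
    show "(1 + -1 * x) * (q1 x + (c*x - 2*c*x^2 + 2*c/3*x^3)) = real (2 * 6 + 1) * -1 * p0 x" for x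
      unfolding p0_def q1_def by simp algebra
    show "real 6 * -1 * ((1 + -1 * x) * (q1 x * p0 x + (1 + -1 * x) * q0 x) - real 6 * -1 * (p0 x)^2)
      = (1 + -1 * x)^2 * ((1 + -1 * x)^6 - 1)" for x
    proof -
      have "real 6 * -1 * ((1 + -1 * x) * (q1 x * p0 x + (1 + -1 * x) * q0 x) - real 6 * -1 * (p0 x)^2)
          - (1 + -1 * x)^2 * ((1 + -1 * x)^6 - 1)
          = (c^2 - 2) * (3 * x^3 - 5/2 * x^4 - 7 * x^5 + 10 * x^6 - 4 * x^7 + 1/2 * x^8)"
        unfolding p0_def q0_def q1_def by (simp add: field_simps) algebra
      then show ?thesis by (simp add: c2)
    qed
  qed (use c2 in \<open>auto simp: p0_def\<close>)
  moreover have "S = family_field p0 q0 q1 (-1) 6"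
    by (auto simp: S_def family_field_def p0_def q0_def q1_def c_def fun_eq_iff algebra_simps)
  ultimately show ?thesis by (simp add: family_isochronous_zero_urabe)
qed

lemma system_iii:
  fixes s :: real
  assumes s: "s \<in> {1, -1}"
  defines "S \<equiv> \<lambda>(x, y). (- y - s * 2 * sqrt 2 * x * y + x^2 + s * 2 * sqrt 2 * x^3,
                    x - s * 6 * sqrt 2 * y^2 - 2 * x * y + s * 2 * sqrt 2 * x^2
                      + s * 8 * sqrt 2 * x^2 * y + 14/3 * x^3 - s * 2 * sqrt 2 * x^4)"
  shows "isochronous_center S \<and> zero_urabe S"
proof -
  define c where "c = s * sqrt 2"
  have c2: "c^2 = 2" using s by (auto simp: c_def power_mult_distrib)
  define p0 where "p0 x = x^2 + 2*c*x^3" for x :: real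
  define q0 where "q0 x = x + 2*c*x^2 + 14/3*x^3 - 2*c*x^4" for x :: real
  define q1 where "q1 x = - 2*x + 8*c*x^2" for x :: real
  have "urabe_family p0 (\<lambda>x. 2*x + 6*c*x^2) q0 q1 (2*c) 3"
  proof
    show "(p0 has_real_derivative 2*x + 6*c*x^2) (at x)" for x
      unfolding p0_def[abs_def]
      by (auto intro!: derivative_eq_intros simp: algebra_simps power2_eq_square power3_eq_cube)
    show "(1 + (2*c) * x) * (q1 x + (2*x + 6*c*x^2)) = real (2 * 3 + 1) * (2*c) * p0 x" for x
      unfolding p0_def q1_def by simp algebra
    show "real 3 * (2*c) * ((1 + (2*c) * x) * (q1 x * p0 x + (1 + (2*c) * x) * q0 x)
        - real 3 * (2*c) * (p0 x)^2) = (1 + (2*c) * x)^2 * ((1 + (2*c) * x)^3 - 1)" for x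
    proof -
      have "real 3 * (2*c) * ((1 + (2*c) * x) * (q1 x * p0 x + (1 + (2*c) * x) * q0 x)
          - real 3 * (2*c) * (p0 x)^2) - (1 + (2*c) * x)^2 * ((1 + (2*c) * x)^3 - 1)
          = (c^2 - 2) * (- 8 * c * x^3 - 32 * c^2 * x^4 - 32 * c^3 * x^5)"
        unfolding p0_def q0_def q1_def by simp algebra
      then show ?thesis by (simp add: c2)
    qed
  qed (use c2 in \<open>auto simp: p0_def\<close>)
  moreover have "S = family_field p0 q0 q1 (2*c) 3"
    by (auto simp: S_def family_field_def p0_def q0_def q1_def c_def fun_eq_iff algebra_simps)
  ultimately show ?thesis by (simp add: family_isochronous_zero_urabe)
qed

theorem theorem4p2:
  shows
   "(\<forall>a::real.
      isochronous_center
        (\<lambda>(x, y). (- y + x * y - 3 * a / 4 * x^2 + a * x^3 - a / 4 * x^4,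
                    x + 3 * y^2 + 3 * a / 2 * x * y - x^2 + 9 * a / 4 * x^2 * y
                      + (1/3 + 9/8 * a^2) * x^3 - 3 * a / 4 * x^3 * y - 3 * a^2 / 8 * x^4)) \<and>
      zero_urabe
        (\<lambda>(x, y). (- y + x * y - 3 * a / 4 * x^2 + a * x^3 - a / 4 * x^4,
                    x + 3 * y^2 + 3 * a / 2 * x * y - x^2 + 9 * a / 4 * x^2 * y
                      + (1/3 + 9/8 * a^2) * x^3 - 3 * a / 4 * x^3 * y - 3 * a^2 / 8 * x^4)))
    \<and> (\<forall>s::real. s \<in> {1, -1} \<longrightarrow>
      isochronous_center
        (\<lambda>(x, y). (- y + x * y + s * sqrt 2 / 2 * x^2 - s * 2 * sqrt 2 / 3 * x^3 + s * sqrt 2 / 6 * x^4,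
                    x + 6 * y^2 - s * sqrt 2 * x * y - 5/2 * x^2 - s * 9 * sqrt 2 / 2 * x^2 * y
                      + 13/3 * x^3 + s * 3 * sqrt 2 / 2 * x^3 * y - 4/3 * x^4)) \<and>
      zero_urabe
        (\<lambda>(x, y). (- y + x * y + s * sqrt 2 / 2 * x^2 - s * 2 * sqrt 2 / 3 * x^3 + s * sqrt 2 / 6 * x^4,
                    x + 6 * y^2 - s * sqrt 2 * x * y - 5/2 * x^2 - s * 9 * sqrt 2 / 2 * x^2 * y
                      + 13/3 * x^3 + s * 3 * sqrt 2 / 2 * x^3 * y - 4/3 * x^4)))
    \<and> (\<forall>s::real. s \<in> {1, -1} \<longrightarrow>
      isochronous_center
        (\<lambda>(x, y). (- y - s * 2 * sqrt 2 * x * y + x^2 + s * 2 * sqrt 2 * x^3,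
                    x - s * 6 * sqrt 2 * y^2 - 2 * x * y + s * 2 * sqrt 2 * x^2
                      + s * 8 * sqrt 2 * x^2 * y + 14/3 * x^3 - s * 2 * sqrt 2 * x^4)) \<and>
      zero_urabe
        (\<lambda>(x, y). (- y - s * 2 * sqrt 2 * x * y + x^2 + s * 2 * sqrt 2 * x^3,
                    x - s * 6 * sqrt 2 * y^2 - 2 * x * y + s * 2 * sqrt 2 * x^2
                      + s * 8 * sqrt 2 * x^2 * y + 14/3 * x^3 - s * 2 * sqrt 2 * x^4)))"
  using system_i system_ii system_iii by blast

end
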